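(* Let $s>-1/2$. Then for every $t\in\mathbb{R}$ the bilinear operator $B_2$ defined in the context maps $\dot H^s\times\dot H^s$ into $\dot H^{s+1}$ and satisfies $$\|B_2(u,v)\|_{\dot H^{s+1}}\le c_2(s+1)\|u\|_{\dot H^s}\|v\|_{\dot H^s},$$ with a constant $c_2(s+1)$ depending only on $s$.
   Context: Write $\mathbb{Z}_0=\mathbb{Z}\setminus\{0\}$. For $s\in\mathbb{R}$, $\dot H^s$ denotes the Hilbert space of complex sequences $v=(v_k)_{k\in\mathbb{Z}_0}$ with $\|v\|_{\dot H^s}^2=\sum_{k\in\mathbb{Z}_0}|k|^{2s}|v_k|^2<\infty$. For $t\in\mathbb{R}$, $$B_2(u,v)_k=\sum_{k_1+k_2=k,\ k_1,k_2\in\mathbb{Z}_0}\frac{e^{3ikk_1k_2t}u_{k_1}v_{k_2}}{k_1k_2},\qquad k\in\mathbb{Z}_0.$$ *)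

theory Defs
  imports "HOL-Analysis.Analysis"
begin

text \<open>Sequences indexed by Z_0 = Z - {0} are modelled as functions int => complex;
  the value at index 0 is irrelevant (never used).\<close>

definition Z0 :: "int set" where "Z0 = {k. k \<noteq> 0}"

definition Hs_weight :: "real \<Rightarrow> (int \<Rightarrow> complex) \<Rightarrow> int \<Rightarrow> real" where
  "Hs_weight s v k = (real_of_int \<bar>k\<bar>) powr (2 * s) * (cmod (v k))\<^sup>2"

definition in_Hs :: "real \<Rightarrow> (int \<Rightarrow> complex) \<Rightarrow> bool" where
  "in_Hs s v \<longleftrightarrow> Hs_weight s v summable_on Z0"

definition Hs_norm :: "real \<Rightarrow> (int \<Rightarrow> complex) \<Rightarrow> real" where
  "Hs_norm s v = sqrt (infsum (Hs_weight s v) Z0)"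

definition B2_term :: "real \<Rightarrow> (int \<Rightarrow> complex) \<Rightarrow> (int \<Rightarrow> complex) \<Rightarrow> int \<Rightarrow> int \<Rightarrow> complex" where
  "B2_term t u v k k1 =
     exp (\<i> * of_real (3 * real_of_int (k * k1 * (k - k1)) * t)) * u k1 * v (k - k1)
       / (of_int k1 * of_int (k - k1))"

definition B2_index :: "int \<Rightarrow> int set" where
  "B2_index k = {k1. k1 \<noteq> 0 \<and> k - k1 \<noteq> 0}"

definition B2 :: "real \<Rightarrow> (int \<Rightarrow> complex) \<Rightarrow> (int \<Rightarrow> complex) \<Rightarrow> int \<Rightarrow> complex" where
  "B2 t u v k = (if k = 0 then 0 else infsum (B2_term t u v k) (B2_index k))"

end

theory Submission
  imports Defs
begin

(* Write a_k = |u_k|/|k|, b_k = |v_k|/|k|, alpha_k = |k|^s |u_k| and beta_k = |k|^s |v_k|.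
   Then |B_2(u,v)_k| <= (a * b)_k, and since |k|^(s+1) <= 2^(s+1) (|k1|^(s+1) + |k2|^(s+1))
   for k = k1 + k2, the weighted coefficient |k|^(s+1) |B_2(u,v)_k| is at most
   2^(s+1) ((alpha * b)_k + (beta * a)_k).  Young's inequality l^2 * l^1 -> l^2 bounds these
   convolutions by ||u||_s ||b||_1 and ||v||_s ||a||_1, and Cauchy-Schwarz gives
   ||a||_1 <= ||u||_s ||(|k|^(-(s+1)))_k||_l2.  The last factor is the norm of the constant
   sequence 1 in H^(-(s+1)), which is finite exactly when s > -1/2. *)

lemma summable_on_mult_of_square_summable:
  fixes f g :: "'a \<Rightarrow> real"
  assumes "\<And>x. 0 \<le> f x" and "\<And>x. 0 \<le> g x"
    and "(\<lambda>x. (f x)^2) summable_on UNIV" and "(\<lambda>x. (g x)^2) summable_on UNIV"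
  shows "(\<lambda>x. f x * g x) summable_on UNIV"
proof (rule summable_on_comparison_test)
  show "(\<lambda>x. ((f x)^2 + (g x)^2) * (1/2)) summable_on UNIV"
    by (intro summable_on_cmult_left summable_on_add assms)
  show "f x * g x \<le> ((f x)^2 + (g x)^2) * (1/2)" for x
    using zero_le_power2[of "f x - g x"] by (simp add: power2_diff)
  show "0 \<le> f x * g x" for x
    using assms by simp
qed

lemma infsum_mult_le_sqrt_infsum:
  fixes f g :: "'a \<Rightarrow> real"
  assumes "\<And>x. 0 \<le> f x" and "\<And>x. 0 \<le> g x"
    and f2: "(\<lambda>x. (f x)^2) summable_on UNIV" and g2: "(\<lambda>x. (g x)^2) summable_on UNIV"
  shows "(\<Sum>\<^sub>\<infinity>x. f x * g x) \<le> sqrt (\<Sum>\<^sub>\<infinity>x. (f x)^2) * sqrt (\<Sum>\<^sub>\<infinity>x. (g x)^2)"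
proof (rule infsum_le_finite_sums[OF summable_on_mult_of_square_summable[OF assms]])
  fix F :: "'a set"
  assume "finite F"
  have "(\<Sum>x\<in>F. f x * g x) = (\<Sum>x\<in>F. \<bar>f x\<bar> * \<bar>g x\<bar>)"
    using assms by simp
  also have "\<dots> \<le> L2_set f F * L2_set g F"
    by (rule L2_set_mult_ineq)
  also have "\<dots> \<le> sqrt (\<Sum>\<^sub>\<infinity>x. (f x)^2) * sqrt (\<Sum>\<^sub>\<infinity>x. (g x)^2)"
    unfolding L2_set_def using \<open>finite F\<close>
    by (intro mult_mono real_sqrt_le_mono finite_sum_le_infsum f2 g2)
       (auto intro: infsum_nonneg sum_nonneg)
  finally show "(\<Sum>x\<in>F. f x * g x) \<le> sqrt (\<Sum>\<^sub>\<infinity>x. (f x)^2) * sqrt (\<Sum>\<^sub>\<infinity>x. (g x)^2)" .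
qed

lemma has_sum_finite_sum:
  fixes f :: "'i \<Rightarrow> 'a \<Rightarrow> 'b::topological_comm_monoid_add"
  assumes "finite I" and "\<And>i. i \<in> I \<Longrightarrow> (f i has_sum S i) A"
  shows "((\<lambda>x. \<Sum>i\<in>I. f i x) has_sum (\<Sum>i\<in>I. S i)) A"
  using assms
proof (induction I rule: finite_induct)
  case (insert i I)
  then show ?case
    using has_sum_add[where f = "f i" and g = "\<lambda>x. \<Sum>i\<in>I. f i x"] by simp
qed simp

definition discrete_conv :: "('a::ab_group_add \<Rightarrow> real) \<Rightarrow> ('a \<Rightarrow> real) \<Rightarrow> 'a \<Rightarrow> real" where
  "discrete_conv f g k = (\<Sum>\<^sub>\<infinity>j. f j * g (k - j))"

lemma bij_betw_diff_left: "bij_betw (\<lambda>j::'a::ab_group_add. k - j) UNIV UNIV"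
  by (rule bij_betwI[where g = "\<lambda>j. k - j"]) auto

lemma discrete_conv_commute: "discrete_conv f g = discrete_conv g f"
proof
  fix k
  show "discrete_conv f g k = discrete_conv g f k"
    unfolding discrete_conv_def
    using infsum_reindex_bij_betw[OF bij_betw_diff_left[of k], of "\<lambda>j. g j * f (k - j)"]
    by (simp add: mult.commute)
qed

lemma summable_on_conv_term_commute:
  "(\<lambda>j. f j * g (k - j)) summable_on UNIV \<longleftrightarrow> (\<lambda>j. g j * f (k - j)) summable_on UNIV"
  for f g :: "'a::ab_group_add \<Rightarrow> real"
  using summable_on_reindex_bij_betw[OF bij_betw_diff_left, of "\<lambda>j. g j * f (k - j)" k]
  by (simp add: mult.commute)

lemma discrete_conv_nonneg:
  assumes "\<And>j. 0 \<le> f j" and "\<And>j. 0 \<le> g j"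
  shows "0 \<le> discrete_conv f g k"
  unfolding discrete_conv_def using assms by (intro infsum_nonneg) simp

lemma le_infsum_of_nonneg:
  fixes g :: "'a \<Rightarrow> real"
  assumes "\<And>i. 0 \<le> g i" and "g summable_on UNIV"
  shows "g j \<le> (\<Sum>\<^sub>\<infinity>i. g i)"
  using finite_sum_le_infsum[OF assms(2), of "{j}"] assms(1) by simp

lemma summable_on_conv_term:
  fixes f g :: "'a::ab_group_add \<Rightarrow> real"
  assumes f0: "\<And>j. 0 \<le> f j" and g0: "\<And>j. 0 \<le> g j"
    and f: "f summable_on UNIV" and g: "g summable_on UNIV"
  shows "(\<lambda>j. f j * g (k - j)) summable_on UNIV"
proof (rule summable_on_comparison_test)
  show "(\<lambda>j. f j * (\<Sum>\<^sub>\<infinity>i. g i)) summable_on UNIV"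
    using f by (rule summable_on_cmult_left)
  show "f j * g (k - j) \<le> f j * (\<Sum>\<^sub>\<infinity>i. g i)" for j
    by (rule mult_left_mono[OF le_infsum_of_nonneg[OF g0 g] f0])
  show "0 \<le> f j * g (k - j)" for j
    using f0 g0 by simp
qed

lemma summable_on_conv_term_square:
  fixes f g :: "'a::ab_group_add \<Rightarrow> real"
  assumes f0: "\<And>j. 0 \<le> f j" and g0: "\<And>j. 0 \<le> g j"
    and f2: "(\<lambda>j. (f j)^2) summable_on UNIV" and g: "g summable_on UNIV"
  shows "(\<lambda>j. f j * g (k - j)) summable_on UNIV"
proof -
  have "(\<lambda>j. (f j * sqrt (g (k - j))) * sqrt (g (k - j))) summable_on UNIV"
  proof (rule summable_on_mult_of_square_summable)
    show "(\<lambda>j. (f j * sqrt (g (k - j)))^2) summable_on UNIV"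
      using summable_on_conv_term[of "\<lambda>j. (f j)^2", OF _ g0 f2 g] g0
      by (simp add: power_mult_distrib)
    show "(\<lambda>j. (sqrt (g (k - j)))^2) summable_on UNIV"
      using summable_on_reindex_bij_betw[OF bij_betw_diff_left, of g k] g g0 by simp
  qed (use f0 g0 in auto)
  then show ?thesis
    using g0 by (simp add: mult.assoc)
qed

lemma sum_discrete_conv_le:
  fixes f g :: "'a::ab_group_add \<Rightarrow> real"
  assumes f0: "\<And>j. 0 \<le> f j" and g0: "\<And>j. 0 \<le> g j"
    and f: "f summable_on UNIV" and g: "g summable_on UNIV" and "finite F"
  shows "sum (discrete_conv f g) F \<le> (\<Sum>\<^sub>\<infinity>j. f j) * (\<Sum>\<^sub>\<infinity>j. g j)"
proof -
  have shifted_sum_le: "(\<Sum>k\<in>F. g (k - j)) \<le> (\<Sum>\<^sub>\<infinity>i. g i)" for j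
  proof -
    have "(\<Sum>k\<in>F. g (k - j)) = sum g ((\<lambda>k. k - j) ` F)"
      by (simp add: sum.reindex inj_on_def)
    also have "\<dots> \<le> (\<Sum>\<^sub>\<infinity>i. g i)"
      using \<open>finite F\<close> g0 by (intro finite_sum_le_infsum g) auto
    finally show ?thesis .
  qed
  have terms: "((\<lambda>j. \<Sum>k\<in>F. f j * g (k - j)) has_sum sum (discrete_conv f g) F) UNIV"
    unfolding discrete_conv_def
    by (intro has_sum_finite_sum \<open>finite F\<close> has_sum_infsum summable_on_conv_term f0 g0 f g)
  have "sum (discrete_conv f g) F = (\<Sum>\<^sub>\<infinity>j. \<Sum>k\<in>F. f j * g (k - j))"
    using terms by (simp add: infsumI)
  also have "\<dots> \<le> (\<Sum>\<^sub>\<infinity>j. f j * (\<Sum>\<^sub>\<infinity>i. g i))"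
  proof (rule infsum_mono)
    show "(\<lambda>j. \<Sum>k\<in>F. f j * g (k - j)) summable_on UNIV"
      using terms by (rule has_sum_imp_summable)
    show "(\<lambda>j. f j * (\<Sum>\<^sub>\<infinity>i. g i)) summable_on UNIV"
      using f by (rule summable_on_cmult_left)
    show "(\<Sum>k\<in>F. f j * g (k - j)) \<le> f j * (\<Sum>\<^sub>\<infinity>i. g i)" for j
      using mult_left_mono[OF shifted_sum_le f0[of j]] by (simp add: sum_distrib_left)
  qed
  also have "\<dots> = (\<Sum>\<^sub>\<infinity>j. f j) * (\<Sum>\<^sub>\<infinity>j. g j)"
    using f by (intro infsum_cmult_left)
  finally show ?thesis .
qed

lemma
  fixes f g :: "'a::ab_group_add \<Rightarrow> real"
  assumes f0: "\<And>j. 0 \<le> f j" and g0: "\<And>j. 0 \<le> g j"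
    and f: "f summable_on UNIV" and g: "g summable_on UNIV"
  shows summable_on_discrete_conv: "discrete_conv f g summable_on UNIV"
    and infsum_discrete_conv_le:
      "(\<Sum>\<^sub>\<infinity>k. discrete_conv f g k) \<le> (\<Sum>\<^sub>\<infinity>j. f j) * (\<Sum>\<^sub>\<infinity>j. g j)"
proof -
  show summable: "discrete_conv f g summable_on UNIV"
    by (rule nonneg_bdd_above_summable_on)
       (use assms in \<open>auto intro!: discrete_conv_nonneg bdd_aboveI sum_discrete_conv_le\<close>)
  show "(\<Sum>\<^sub>\<infinity>k. discrete_conv f g k) \<le> (\<Sum>\<^sub>\<infinity>j. f j) * (\<Sum>\<^sub>\<infinity>j. g j)"
    by (rule infsum_le_finite_sums[OF summable]) (use assms in \<open>auto intro: sum_discrete_conv_le\<close>)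
qed

lemma discrete_conv_square_le:
  fixes f g :: "'a::ab_group_add \<Rightarrow> real"
  assumes f0: "\<And>j. 0 \<le> f j" and g0: "\<And>j. 0 \<le> g j"
    and f2: "(\<lambda>j. (f j)^2) summable_on UNIV" and g: "g summable_on UNIV"
  shows "(discrete_conv f g k)^2 \<le> (\<Sum>\<^sub>\<infinity>j. g j) * discrete_conv (\<lambda>j. (f j)^2) g k"
proof -
  let ?F = "\<lambda>j. f j * sqrt (g (k - j))" and ?G = "\<lambda>j. sqrt (g (k - j))"
  have F2: "(?F j)^2 = (f j)^2 * g (k - j)" and G2: "(?G j)^2 = g (k - j)" for j
    using g0[of "k - j"] by (simp_all add: power_mult_distrib)
  have G2_sum: "(\<Sum>\<^sub>\<infinity>j. g (k - j)) = (\<Sum>\<^sub>\<infinity>j. g j)"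
    by (rule infsum_reindex_bij_betw[OF bij_betw_diff_left])
  have "discrete_conv f g k = (\<Sum>\<^sub>\<infinity>j. ?F j * ?G j)"
    unfolding discrete_conv_def using g0 by (simp add: mult.assoc)
  also have "\<dots> \<le> sqrt (\<Sum>\<^sub>\<infinity>j. (?F j)^2) * sqrt (\<Sum>\<^sub>\<infinity>j. (?G j)^2)"
  proof (rule infsum_mult_le_sqrt_infsum)
    show "(\<lambda>j. (?F j)^2) summable_on UNIV"
      unfolding F2 by (rule summable_on_conv_term) (use f2 g0 g in auto)
    show "(\<lambda>j. (?G j)^2) summable_on UNIV"
      unfolding G2 using summable_on_reindex_bij_betw[OF bij_betw_diff_left, of g k] g by simp
  qed (use f0 g0 in auto)
  also have "\<dots> = sqrt (discrete_conv (\<lambda>j. (f j)^2) g k) * sqrt (\<Sum>\<^sub>\<infinity>j. g j)"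
    unfolding F2 G2 G2_sum discrete_conv_def ..
  finally have "(discrete_conv f g k)^2 \<le> (sqrt (discrete_conv (\<lambda>j. (f j)^2) g k) * sqrt (\<Sum>\<^sub>\<infinity>j. g j))^2"
    using discrete_conv_nonneg[OF f0 g0] by (intro power_mono)
  also have "\<dots> = (\<Sum>\<^sub>\<infinity>j. g j) * discrete_conv (\<lambda>j. (f j)^2) g k"
    using discrete_conv_nonneg[of "\<lambda>j. (f j)^2" g, OF _ g0] infsum_nonneg[of UNIV g] g0
    by (simp add: power_mult_distrib)
  finally show ?thesis .
qed

lemma
  fixes f g :: "'a::ab_group_add \<Rightarrow> real"
  assumes f0: "\<And>j. 0 \<le> f j" and g0: "\<And>j. 0 \<le> g j"
    and f2: "(\<lambda>j. (f j)^2) summable_on UNIV" and g: "g summable_on UNIV"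
  shows summable_on_square_discrete_conv: "(\<lambda>k. (discrete_conv f g k)^2) summable_on UNIV"
    and infsum_square_discrete_conv_le:
      "(\<Sum>\<^sub>\<infinity>k. (discrete_conv f g k)^2) \<le> (\<Sum>\<^sub>\<infinity>j. (f j)^2) * (\<Sum>\<^sub>\<infinity>j. g j)^2"
proof -
  let ?S = "\<Sum>\<^sub>\<infinity>j. g j"
  have conv2: "discrete_conv (\<lambda>j. (f j)^2) g summable_on UNIV"
    by (rule summable_on_discrete_conv) (use f2 g0 g in auto)
  have bound: "(discrete_conv f g k)^2 \<le> ?S * discrete_conv (\<lambda>j. (f j)^2) g k" for k
    by (rule discrete_conv_square_le[OF f0 g0 f2 g])
  show summable: "(\<lambda>k. (discrete_conv f g k)^2) summable_on UNIV"
    by (rule summable_on_comparison_test[OF summable_on_cmult_right[OF conv2] bound]) simp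
  have "(\<Sum>\<^sub>\<infinity>k. (discrete_conv f g k)^2) \<le> (\<Sum>\<^sub>\<infinity>k. ?S * discrete_conv (\<lambda>j. (f j)^2) g k)"
    by (rule infsum_mono[OF summable summable_on_cmult_right[OF conv2] bound])
  also have "\<dots> = ?S * (\<Sum>\<^sub>\<infinity>k. discrete_conv (\<lambda>j. (f j)^2) g k)"
    using conv2 by (rule infsum_cmult_right)
  also have "\<dots> \<le> ?S * ((\<Sum>\<^sub>\<infinity>j. (f j)^2) * ?S)"
    using g0 by (intro mult_left_mono infsum_discrete_conv_le f2 g infsum_nonneg) auto
  finally show "(\<Sum>\<^sub>\<infinity>k. (discrete_conv f g k)^2) \<le> (\<Sum>\<^sub>\<infinity>j. (f j)^2) * ?S^2"
    by (simp add: power2_eq_square algebra_simps)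
qed

lemma abs_add_powr_le:
  fixes a b r :: real
  assumes "0 \<le> r"
  shows "\<bar>a + b\<bar> powr r \<le> 2 powr r * (\<bar>a\<bar> powr r + \<bar>b\<bar> powr r)"
proof -
  have "\<bar>a + b\<bar> powr r \<le> (2 * max \<bar>a\<bar> \<bar>b\<bar>) powr r"
    using assms by (intro powr_mono2) auto
  also have "\<dots> = 2 powr r * max \<bar>a\<bar> \<bar>b\<bar> powr r"
    by (simp add: powr_mult)
  also have "\<dots> \<le> 2 powr r * (\<bar>a\<bar> powr r + \<bar>b\<bar> powr r)"
    by (intro mult_left_mono) (auto simp: max_def)
  finally show ?thesis .
qed

lemma summable_on_abs_powr_int:
  fixes p :: real
  assumes "p < -1"
  shows "(\<lambda>k::int. real_of_int \<bar>k\<bar> powr p) summable_on UNIV"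
proof -
  let ?g = "\<lambda>k::int. real_of_int \<bar>k\<bar> powr p"
  have nat: "(\<lambda>n::nat. real n powr p) summable_on UNIV"
    using summable_real_powr_iff[of p] summable_on_UNIV_nonneg_real_iff[of "\<lambda>n::nat. real n powr p"] assms
    by simp
  have "?g summable_on range int"
    by (subst summable_on_reindex) (use nat in \<open>auto simp: o_def\<close>)
  moreover have "?g summable_on range (\<lambda>n. - int n)"
    by (subst summable_on_reindex) (use nat in \<open>auto simp: o_def inj_on_def\<close>)
  moreover have "range int \<union> range (\<lambda>n. - int n) = UNIV"
    by (auto simp: image_iff) (metis minus_minus nonneg_int_cases not_less le_less neg_0_le_iff_le)
  ultimately show ?thesis
    by (metis summable_on_union)
qed

text \<open>\<open>Hs_abs (-1) u k\<close> is \<open>|u_k|/|k|\<close>; it vanishes at \<open>k = 0\<close> because \<open>0 powr x = 0\<close>.\<close>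

definition Hs_abs :: "real \<Rightarrow> (int \<Rightarrow> complex) \<Rightarrow> int \<Rightarrow> real" where
  "Hs_abs s v k = real_of_int \<bar>k\<bar> powr s * cmod (v k)"

lemma Hs_abs_nonneg: "0 \<le> Hs_abs s v k"
  by (simp add: Hs_abs_def)

lemma Hs_abs_add: "Hs_abs (s + r) v k = real_of_int \<bar>k\<bar> powr r * Hs_abs s v k"
  by (simp add: Hs_abs_def powr_add)

lemma Hs_abs_mult: "Hs_abs (s + p) (\<lambda>k. u k * v k) k = Hs_abs s u k * Hs_abs p v k"
  by (simp add: Hs_abs_def powr_add norm_mult)

lemma Hs_weight_eq: "Hs_weight s v k = (Hs_abs s v k)^2"
  by (simp add: Hs_weight_def Hs_abs_def power_mult_distrib powr_powr[symmetric] mult.commute)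

lemma in_Hs_iff: "in_Hs s v \<longleftrightarrow> (\<lambda>k. (Hs_abs s v k)^2) summable_on UNIV"
  unfolding in_Hs_def by (rule summable_on_cong_neutral) (auto simp: Z0_def Hs_weight_eq Hs_abs_def)

lemma Hs_norm_eq: "Hs_norm s v = sqrt (\<Sum>\<^sub>\<infinity>k. (Hs_abs s v k)^2)"
  unfolding Hs_norm_def by (subst infsum_cong_neutral) (auto simp: Z0_def Hs_weight_eq Hs_abs_def)

lemma Hs_norm_nonneg: "0 \<le> Hs_norm s v"
  unfolding Hs_norm_eq by (simp add: infsum_nonneg)

lemma in_Hs_one: "p < -1/2 \<Longrightarrow> in_Hs p (\<lambda>_. 1)"
  unfolding in_Hs_iff using summable_on_abs_powr_int[of "2 * p"]
  by (simp add: Hs_abs_def powr_powr[symmetric] mult.commute)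

lemma
  assumes "in_Hs s u" and "in_Hs p v"
  shows summable_on_Hs_abs_mult: "Hs_abs (s + p) (\<lambda>k. u k * v k) summable_on UNIV"
    and infsum_Hs_abs_mult_le:
      "(\<Sum>\<^sub>\<infinity>k. Hs_abs (s + p) (\<lambda>k. u k * v k) k) \<le> Hs_norm s u * Hs_norm p v"
proof -
  have "Hs_abs (s + p) (\<lambda>k. u k * v k) = (\<lambda>k. Hs_abs s u k * Hs_abs p v k)"
    by (simp add: fun_eq_iff Hs_abs_mult)
  then show "Hs_abs (s + p) (\<lambda>k. u k * v k) summable_on UNIV"
    and "(\<Sum>\<^sub>\<infinity>k. Hs_abs (s + p) (\<lambda>k. u k * v k) k) \<le> Hs_norm s u * Hs_norm p v"
    using summable_on_mult_of_square_summable[of "Hs_abs s u" "Hs_abs p v"]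
      infsum_mult_le_sqrt_infsum[of "Hs_abs s u" "Hs_abs p v"] assms
    by (simp_all add: Hs_abs_nonneg in_Hs_iff Hs_norm_eq)
qed

lemma
  assumes "s > -1/2" and "in_Hs s u"
  shows summable_on_Hs_abs_minus_one: "Hs_abs (-1) u summable_on UNIV"
    and infsum_Hs_abs_minus_one_le:
      "(\<Sum>\<^sub>\<infinity>k. Hs_abs (-1) u k) \<le> Hs_norm s u * Hs_norm (-(s + 1)) (\<lambda>_. 1)"
proof -
  have one: "in_Hs (-(s + 1)) (\<lambda>_. 1)"
    using assms(1) by (intro in_Hs_one) simp
  have "Hs_abs (-1) u = Hs_abs (s + -(s + 1)) (\<lambda>k. u k * 1)"
    by simp
  then show "Hs_abs (-1) u summable_on UNIV"
    and "(\<Sum>\<^sub>\<infinity>k. Hs_abs (-1) u k) \<le> Hs_norm s u * Hs_norm (-(s + 1)) (\<lambda>_. 1)"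
    using summable_on_Hs_abs_mult[OF assms(2) one] infsum_Hs_abs_mult_le[OF assms(2) one] by simp_all
qed

lemma
  assumes bound: "\<And>k. (Hs_abs s x k)^2 \<le> h k" and h: "h summable_on UNIV"
  shows in_Hs_dominated: "in_Hs s x"
    and Hs_norm_dominated: "Hs_norm s x \<le> sqrt (\<Sum>\<^sub>\<infinity>k. h k)"
proof -
  show summable: "in_Hs s x"
    unfolding in_Hs_iff by (rule summable_on_comparison_test[OF h bound]) simp
  show "Hs_norm s x \<le> sqrt (\<Sum>\<^sub>\<infinity>k. h k)"
    unfolding Hs_norm_eq using summable h bound
    by (intro real_sqrt_le_mono infsum_mono) (simp_all add: in_Hs_iff)
qed

lemma norm_B2_term: "norm (B2_term t u v k j) = Hs_abs (-1) u j * Hs_abs (-1) v (k - j)"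
  by (simp add: B2_term_def Hs_abs_def norm_mult norm_divide powr_minus divide_inverse
      norm_inverse mult_ac flip: of_int_diff)

lemma B2_eq_infsum: "k \<noteq> 0 \<Longrightarrow> B2 t u v k = (\<Sum>\<^sub>\<infinity>j. B2_term t u v k j)"
  unfolding B2_def by (auto intro: infsum_cong_neutral simp: B2_index_def B2_term_def)

lemma powr_mult_Hs_abs_le:
  assumes "0 \<le> r"
  shows "real_of_int \<bar>k\<bar> powr r * (Hs_abs (-1) u j * Hs_abs (-1) v (k - j))
    \<le> 2 powr r * (Hs_abs (r - 1) u j * Hs_abs (-1) v (k - j) + Hs_abs (-1) u j * Hs_abs (r - 1) v (k - j))"
proof -
  have "real_of_int \<bar>k\<bar> powr r \<le> 2 powr r * (real_of_int \<bar>j\<bar> powr r + real_of_int \<bar>k - j\<bar> powr r)"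
    using abs_add_powr_le[OF assms, of "real_of_int j" "real_of_int (k - j)"] by simp
  then have "real_of_int \<bar>k\<bar> powr r * (Hs_abs (-1) u j * Hs_abs (-1) v (k - j))
    \<le> 2 powr r * (real_of_int \<bar>j\<bar> powr r + real_of_int \<bar>k - j\<bar> powr r) * (Hs_abs (-1) u j * Hs_abs (-1) v (k - j))"
    by (rule mult_right_mono) (simp add: Hs_abs_nonneg)
  also have "\<dots> = 2 powr r * (Hs_abs (r - 1) u j * Hs_abs (-1) v (k - j) + Hs_abs (-1) u j * Hs_abs (r - 1) v (k - j))"
    using Hs_abs_add[of "-1" r] by (simp add: algebra_simps)
  finally show ?thesis .
qed

lemma
  assumes s: "s > -1/2" and u: "in_Hs s u" and v: "in_Hs s v"
  shows summable_on_square_conv_Hs_abs: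
      "(\<lambda>k. (discrete_conv (Hs_abs s u) (Hs_abs (-1) v) k)^2) summable_on UNIV"
    and infsum_square_conv_Hs_abs_le:
      "(\<Sum>\<^sub>\<infinity>k. (discrete_conv (Hs_abs s u) (Hs_abs (-1) v) k)^2)
        \<le> (Hs_norm s u * Hs_norm s v * Hs_norm (-(s + 1)) (\<lambda>_. 1))^2"
proof -
  have u2: "(\<lambda>k. (Hs_abs s u k)^2) summable_on UNIV"
    using u by (simp add: in_Hs_iff)
  note v1 = summable_on_Hs_abs_minus_one[OF s v]
  show "(\<lambda>k. (discrete_conv (Hs_abs s u) (Hs_abs (-1) v) k)^2) summable_on UNIV"
    by (rule summable_on_square_discrete_conv[OF Hs_abs_nonneg Hs_abs_nonneg u2 v1])
  have "(\<Sum>\<^sub>\<infinity>k. (discrete_conv (Hs_abs s u) (Hs_abs (-1) v) k)^2)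
      \<le> (\<Sum>\<^sub>\<infinity>k. (Hs_abs s u k)^2) * (\<Sum>\<^sub>\<infinity>k. Hs_abs (-1) v k)^2"
    by (rule infsum_square_discrete_conv_le[OF Hs_abs_nonneg Hs_abs_nonneg u2 v1])
  also have "\<dots> \<le> (Hs_norm s u)^2 * (Hs_norm s v * Hs_norm (-(s + 1)) (\<lambda>_. 1))^2"
    unfolding Hs_norm_eq[of s u] using infsum_nonneg[of UNIV "\<lambda>k. (Hs_abs s u k)^2"]
    by (intro mult_mono power_mono infsum_Hs_abs_minus_one_le[OF s v] infsum_nonneg)
       (simp_all add: Hs_abs_nonneg)
  finally show "(\<Sum>\<^sub>\<infinity>k. (discrete_conv (Hs_abs s u) (Hs_abs (-1) v) k)^2)
        \<le> (Hs_norm s u * Hs_norm s v * Hs_norm (-(s + 1)) (\<lambda>_. 1))^2"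
    by (simp add: power_mult_distrib mult.assoc)
qed

lemma summable_on_conv_term_Hs_abs:
  assumes "s > -1/2" and "in_Hs s u" and "in_Hs s v"
  shows "(\<lambda>j. Hs_abs s u j * Hs_abs (-1) v (k - j)) summable_on UNIV"
  using assms
  by (intro summable_on_conv_term_square Hs_abs_nonneg summable_on_Hs_abs_minus_one)
     (simp_all add: in_Hs_iff)

context
  fixes s :: real and u v :: "int \<Rightarrow> complex"
  assumes s: "s > -1/2" and u: "in_Hs s u" and v: "in_Hs s v"
begin

lemma abs_summable_on_B2_term: "(\<lambda>j. norm (B2_term t u v k j)) summable_on UNIV"
  unfolding norm_B2_term
  by (intro summable_on_conv_term Hs_abs_nonneg summable_on_Hs_abs_minus_one[OF s u]
      summable_on_Hs_abs_minus_one[OF s v])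

lemma summable_on_B2_term: "B2_term t u v k summable_on A"
  by (rule abs_summable_summable, rule summable_on_subset[OF abs_summable_on_B2_term]) simp

lemma norm_B2_le: "norm (B2 t u v k) \<le> discrete_conv (Hs_abs (-1) u) (Hs_abs (-1) v) k"
proof (cases "k = 0")
  case True
  then show ?thesis
    by (simp add: B2_def discrete_conv_nonneg Hs_abs_nonneg)
next
  case False
  then show ?thesis
    using norm_infsum_bound[OF abs_summable_on_B2_term, of t k]
    by (simp add: B2_eq_infsum norm_B2_term discrete_conv_def)
qed

lemma Hs_abs_B2_le:
  "Hs_abs (s + 1) (B2 t u v) k \<le> 2 powr (s + 1) *
     (discrete_conv (Hs_abs s u) (Hs_abs (-1) v) k + discrete_conv (Hs_abs s v) (Hs_abs (-1) u) k)"
proof -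
  let ?a = "Hs_abs (-1) u" and ?b = "Hs_abs (-1) v"
  have P: "(\<lambda>j. Hs_abs s u j * ?b (k - j)) summable_on UNIV"
    by (rule summable_on_conv_term_Hs_abs[OF s u v])
  have Q: "(\<lambda>j. ?a j * Hs_abs s v (k - j)) summable_on UNIV"
    using summable_on_conv_term_Hs_abs[OF s v u] by (simp add: summable_on_conv_term_commute)
  have "Hs_abs (s + 1) (B2 t u v) k \<le> real_of_int \<bar>k\<bar> powr (s + 1) * discrete_conv ?a ?b k"
    unfolding Hs_abs_def[of "s + 1"] by (intro mult_left_mono norm_B2_le) simp
  also have "\<dots> = (\<Sum>\<^sub>\<infinity>j. real_of_int \<bar>k\<bar> powr (s + 1) * (?a j * ?b (k - j)))"
    unfolding discrete_conv_def using abs_summable_on_B2_term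
    by (intro infsum_cmult_right[symmetric]) (simp add: norm_B2_term)
  also have "\<dots> \<le> (\<Sum>\<^sub>\<infinity>j. 2 powr (s + 1) * (Hs_abs s u j * ?b (k - j) + ?a j * Hs_abs s v (k - j)))"
  proof (rule infsum_mono)
    show "(\<lambda>j. real_of_int \<bar>k\<bar> powr (s + 1) * (?a j * ?b (k - j))) summable_on UNIV"
      using abs_summable_on_B2_term by (intro summable_on_cmult_right) (simp add: norm_B2_term)
    show "(\<lambda>j. 2 powr (s + 1) * (Hs_abs s u j * ?b (k - j) + ?a j * Hs_abs s v (k - j))) summable_on UNIV"
      by (intro summable_on_cmult_right summable_on_add P Q)
    show "real_of_int \<bar>k\<bar> powr (s + 1) * (?a j * ?b (k - j))
        \<le> 2 powr (s + 1) * (Hs_abs s u j * ?b (k - j) + ?a j * Hs_abs s v (k - j))" for j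
      using powr_mult_Hs_abs_le[of "s + 1" k u j v] s by simp
  qed
  also have "\<dots> = 2 powr (s + 1) * (discrete_conv (Hs_abs s u) ?b k + discrete_conv ?a (Hs_abs s v) k)"
    using P Q by (simp add: discrete_conv_def infsum_cmult_right summable_on_add infsum_add)
  finally show ?thesis
    by (simp add: discrete_conv_commute[of ?a])
qed

lemma square_Hs_abs_B2_le:
  "(Hs_abs (s + 1) (B2 t u v) k)^2 \<le> 2 * (2 powr (s + 1))^2 *
     ((discrete_conv (Hs_abs s u) (Hs_abs (-1) v) k)^2 + (discrete_conv (Hs_abs s v) (Hs_abs (-1) u) k)^2)"
proof -
  let ?P = "discrete_conv (Hs_abs s u) (Hs_abs (-1) v) k"
    and ?Q = "discrete_conv (Hs_abs s v) (Hs_abs (-1) u) k"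
  have "(Hs_abs (s + 1) (B2 t u v) k)^2 \<le> (2 powr (s + 1) * (?P + ?Q))^2"
    by (intro power_mono Hs_abs_B2_le Hs_abs_nonneg)
  also have "\<dots> = (2 powr (s + 1))^2 * (?P + ?Q)^2"
    by (simp add: power_mult_distrib)
  also have "\<dots> \<le> (2 powr (s + 1))^2 * (2 * (?P^2 + ?Q^2))"
    using zero_le_power2[of "?P - ?Q"]
    by (intro mult_left_mono) (simp_all add: power2_eq_square algebra_simps)
  also have "\<dots> = 2 * (2 powr (s + 1))^2 * (?P^2 + ?Q^2)"
    by (simp only: ac_simps)
  finally show ?thesis .
qed

lemma
  shows in_Hs_B2: "in_Hs (s + 1) (B2 t u v)"
    and Hs_norm_B2_le: "Hs_norm (s + 1) (B2 t u v)
      \<le> 2 * 2 powr (s + 1) * Hs_norm (-(s + 1)) (\<lambda>_. 1) * Hs_norm s u * Hs_norm s v"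
proof -
  let ?P = "\<lambda>k. discrete_conv (Hs_abs s u) (Hs_abs (-1) v) k"
    and ?Q = "\<lambda>k. discrete_conv (Hs_abs s v) (Hs_abs (-1) u) k"
    and ?N = "Hs_norm s u * Hs_norm s v * Hs_norm (-(s + 1)) (\<lambda>_. 1)"
  have P2: "(\<lambda>k. (?P k)^2) summable_on UNIV" and Q2: "(\<lambda>k. (?Q k)^2) summable_on UNIV"
    by (intro summable_on_square_conv_Hs_abs s u v)+
  have h: "(\<lambda>k. 2 * (2 powr (s + 1))^2 * ((?P k)^2 + (?Q k)^2)) summable_on UNIV"
    by (intro summable_on_cmult_right summable_on_add P2 Q2)
  show "in_Hs (s + 1) (B2 t u v)"
    by (rule in_Hs_dominated[OF square_Hs_abs_B2_le h])
  have "(\<Sum>\<^sub>\<infinity>k. 2 * (2 powr (s + 1))^2 * ((?P k)^2 + (?Q k)^2))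
      = 2 * (2 powr (s + 1))^2 * ((\<Sum>\<^sub>\<infinity>k. (?P k)^2) + (\<Sum>\<^sub>\<infinity>k. (?Q k)^2))"
    using P2 Q2 by (simp add: infsum_cmult_right summable_on_add infsum_add)
  also have "\<dots> \<le> 2 * (2 powr (s + 1))^2 * (?N^2 + ?N^2)"
    using infsum_square_conv_Hs_abs_le[OF s u v] infsum_square_conv_Hs_abs_le[OF s v u]
    by (intro mult_left_mono add_mono) (simp_all add: mult_ac)
  also have "\<dots> = (2 * 2 powr (s + 1) * ?N)^2"
    by (simp add: power_mult_distrib)
  finally have "sqrt (\<Sum>\<^sub>\<infinity>k. 2 * (2 powr (s + 1))^2 * ((?P k)^2 + (?Q k)^2)) \<le> 2 * 2 powr (s + 1) * ?N"
    by (rule real_le_lsqrt[rotated]) (simp add: Hs_norm_nonneg)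
  from order_trans[OF Hs_norm_dominated[OF square_Hs_abs_B2_le h] this]
  show "Hs_norm (s + 1) (B2 t u v)
      \<le> 2 * 2 powr (s + 1) * Hs_norm (-(s + 1)) (\<lambda>_. 1) * Hs_norm s u * Hs_norm s v"
    by (simp add: mult_ac)
qed

end

theorem lemma7p2:
  fixes s :: real
  assumes "s > -1/2"
  shows "\<exists>C. \<forall>t::real. \<forall>u v. in_Hs s u \<longrightarrow> in_Hs s v \<longrightarrow>
           (\<forall>k\<in>Z0. B2_term t u v k summable_on B2_index k)
           \<and> in_Hs (s + 1) (B2 t u v)
           \<and> Hs_norm (s + 1) (B2 t u v) \<le> C * Hs_norm s u * Hs_norm s v"
  using summable_on_B2_term in_Hs_B2 Hs_norm_B2_le assms
  by (intro exI[of _ "2 * 2 powr (s + 1) * Hs_norm (-(s + 1)) (\<lambda>_. 1)"] allI impI conjI ballI)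

end
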